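(* Under the setup in the context, $$\sup_{t\in\mathbb{R}}\big|\mathbb{P}(\|T_n\|_\infty\le t)-\mathbb{P}(\|T_n^Y\|_\infty\le t)\big|\le n\,\mathbb{P}\Big(\max_{1\le j\le d}\frac{(e_j^\top X_1)^2}{a_j^2}>n\Big).$$
   Context: Let $n\ge1$, $d\ge1$, and let $X_1,\dots,X_n$ be IID integrable random vectors in $\mathbb{R}^d$ with $\mathbb{E}X_1=0$ and $\mathbb{P}(e_j^\top X_1\neq0)>0$ for every $j$, where $e_j$ is the $j$-th canonical basis vector; $\|\cdot\|_\infty$ is the max-norm. For each $j$ define $a_j\ge0$ by $a_j^2:=\sup\{b\ge0:\mathbb{E}[(e_j^\top X_1)^2\mathbf{1}\{(e_j^\top X_1)^2\le bn\}]\ge b\}$, and $e_j^\top Y_i := \frac{e_j^\top X_i}{a_j n^{1/2}}\mathbf{1}\{(e_j^\top X_i)^2\le a_j^2 n\}$. Define $e_j^\top T_n := |\sum_{i=1}^n e_j^\top X_i|/\sqrt{\sum_{i=1}^n (e_j^\top X_i)^2}$ and $e_j^\top T_n^Y := |\sum_{i=1}^n e_j^\top Y_i|/\sqrt{\sum_{i=1}^n (e_j^\top Y_i)^2}$ (with the same fixed convention for $0/0$ in both). *)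

theory Defs
  imports "HOL-Probability.Probability"
begin

definition trunc_level :: "'a measure \<Rightarrow> (nat \<Rightarrow> 'a \<Rightarrow> real ^ 'd) \<Rightarrow> nat \<Rightarrow> 'd \<Rightarrow> real" where
  "trunc_level M X n j = sqrt (Sup {b::real. b \<ge> 0 \<and>
      (\<integral>\<omega>. (X 1 \<omega> $ j)\<^sup>2 * indicator {\<omega>. (X 1 \<omega> $ j)\<^sup>2 \<le> b * real n} \<omega> \<partial>M) \<ge> b})"

definition trunc_vec :: "'a measure \<Rightarrow> (nat \<Rightarrow> 'a \<Rightarrow> real ^ 'd) \<Rightarrow> nat \<Rightarrow> nat \<Rightarrow> 'a \<Rightarrow> real ^ 'd" where
  "trunc_vec M X n i \<omega> = (\<chi> j. (X i \<omega> $ j) / (trunc_level M X n j * sqrt (real n))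
      * indicator {x. x\<^sup>2 \<le> (trunc_level M X n j)\<^sup>2 * real n} (X i \<omega> $ j))"

text \<open>Self-normalized statistic, coordinatewise; 0/0 = 0 convention (Isabelle division).\<close>
definition self_norm :: "(nat \<Rightarrow> 'a \<Rightarrow> real ^ 'd) \<Rightarrow> nat \<Rightarrow> 'a \<Rightarrow> real ^ 'd" where
  "self_norm Z n \<omega> = (\<chi> j. \<bar>\<Sum>i=1..n. Z i \<omega> $ j\<bar> / sqrt (\<Sum>i=1..n. (Z i \<omega> $ j)\<^sup>2))"

definition max_norm :: "real ^ 'd \<Rightarrow> real" where
  "max_norm x = Max (range (\<lambda>j. \<bar>x $ j\<bar>))"

end

theory Submission
  imports Defs
begin

text \<open>
  Truncation changes no observation on the complement of the event E that some coordinate of some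
  X i exceeds its level, i.e. (X i $ j)^2 > a j^2 n. Off E each Y i is X i with every coordinate j
  divided by the same constant a j sqrt n, and the self-normalized statistic is invariant under
  such rescaling, so T n and T n^Y coincide there. Hence both distribution functions differ by at
  most P(E), and the union bound together with the identical distribution of the X i gives
  P(E) <= n P(X 1 exceeds some level).
\<close>

lemma borel_measurable_vec_nth [measurable (raw)]:
  "f \<in> borel_measurable M \<Longrightarrow> (\<lambda>x. f x $ i :: real) \<in> borel_measurable M"
  using measurable_compose[OF _ borel_measurable_nth] .

lemma max_norm_le_iff: "max_norm (x :: real ^ 'd) \<le> t \<longleftrightarrow> (\<forall>j. \<bar>x $ j\<bar> \<le> t)"
  unfolding max_norm_def by (simp add: Max_le_iff)

lemma sets_Collect_max_norm_le:
  assumes "\<And>j. (\<lambda>\<omega>. f \<omega> $ j) \<in> borel_measurable M"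
  shows "{\<omega> \<in> space M. max_norm (f \<omega> :: real ^ 'd) \<le> t} \<in> sets M"
  unfolding max_norm_le_iff using assms by measurable

lemma borel_measurable_self_norm_nth:
  assumes "\<And>i j. i \<in> {1..n} \<Longrightarrow> (\<lambda>\<omega>. Z i \<omega> $ j) \<in> borel_measurable M"
  shows "(\<lambda>\<omega>. self_norm Z n \<omega> $ j) \<in> borel_measurable M"
  unfolding self_norm_def vec_lambda_beta using assms by measurable

lemma borel_measurable_trunc_vec:
  assumes "X i \<in> borel_measurable M"
  shows "(\<lambda>\<omega>. trunc_vec N X n i \<omega> $ j) \<in> borel_measurable M"
  unfolding trunc_vec_def vec_lambda_beta using assms by measurable

lemma self_normalized_sum_divide:
  fixes x :: "'i \<Rightarrow> real" and c :: real
  assumes "c \<noteq> 0"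
  shows "\<bar>\<Sum>i\<in>A. x i / c\<bar> / sqrt (\<Sum>i\<in>A. (x i / c)\<^sup>2)
       = \<bar>\<Sum>i\<in>A. x i\<bar> / sqrt (\<Sum>i\<in>A. (x i)\<^sup>2)"
proof -
  have "(\<Sum>i\<in>A. x i / c) = (\<Sum>i\<in>A. x i) / c"
    by (rule sum_divide_distrib[symmetric])
  moreover have "(\<Sum>i\<in>A. (x i / c)\<^sup>2) = (\<Sum>i\<in>A. (x i)\<^sup>2) / c\<^sup>2"
    by (simp add: sum_divide_distrib power_divide)
  ultimately show ?thesis
    using assms by (simp add: real_sqrt_divide abs_divide)
qed

lemma self_norm_trunc_vec_eq:
  assumes "n \<ge> 1"
    and below: "\<And>i j. i \<in> {1..n} \<Longrightarrow> (X i \<omega> $ j)\<^sup>2 \<le> (trunc_level M X n j)\<^sup>2 * real n"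
  shows "self_norm (trunc_vec M X n) n \<omega> = self_norm X n \<omega>"
proof (unfold self_norm_def, rule vec_eq_iff[THEN iffD2], intro allI)
  fix j
  define c where "c = trunc_level M X n j * sqrt (real n)"
  have Y: "trunc_vec M X n i \<omega> $ j = X i \<omega> $ j / c" if "i \<in> {1..n}" for i
    using below[OF that, of j] unfolding trunc_vec_def c_def by simp
  have "(\<Sum>i=1..n. trunc_vec M X n i \<omega> $ j) = (\<Sum>i=1..n. X i \<omega> $ j / c)"
    and "(\<Sum>i=1..n. (trunc_vec M X n i \<omega> $ j)\<^sup>2) = (\<Sum>i=1..n. (X i \<omega> $ j / c)\<^sup>2)"
    by (simp_all add: Y)
  then have "\<bar>\<Sum>i=1..n. trunc_vec M X n i \<omega> $ j\<bar> / sqrt (\<Sum>i=1..n. (trunc_vec M X n i \<omega> $ j)\<^sup>2)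
      = \<bar>\<Sum>i=1..n. X i \<omega> $ j / c\<bar> / sqrt (\<Sum>i=1..n. (X i \<omega> $ j / c)\<^sup>2)"
    by (simp only:)
  also have "\<dots> = \<bar>\<Sum>i=1..n. X i \<omega> $ j\<bar> / sqrt (\<Sum>i=1..n. (X i \<omega> $ j)\<^sup>2)"
  proof (cases "c = 0")
    case True
    then have "X i \<omega> $ j = 0" if "i \<in> {1..n}" for i
      using below[OF that, of j] \<open>n \<ge> 1\<close> by (simp add: c_def)
    then show ?thesis by simp
  next
    case False
    then show ?thesis by (rule self_normalized_sum_divide)
  qed
  finally show "(\<chi> j. \<bar>\<Sum>i=1..n. trunc_vec M X n i \<omega> $ j\<bar>
                      / sqrt (\<Sum>i=1..n. (trunc_vec M X n i \<omega> $ j)\<^sup>2)) $ j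
              = (\<chi> j. \<bar>\<Sum>i=1..n. X i \<omega> $ j\<bar> / sqrt (\<Sum>i=1..n. (X i \<omega> $ j)\<^sup>2)) $ j"
    by simp
qed

lemma (in finite_measure) abs_measure_diff_le_if_eq_off:
  assumes "A \<in> sets M" "B \<in> sets M" "E \<in> sets M" and "A - E = B - E"
  shows "\<bar>measure M A - measure M B\<bar> \<le> measure M E"
proof -
  have "measure M C \<le> measure M D + measure M E"
    if "C - E = D - E" "D \<in> sets M" for C D
  proof -
    have "measure M C \<le> measure M (D \<union> E)"
      using that assms(3) by (intro finite_measure_mono) auto
    also have "\<dots> \<le> measure M D + measure M E"
      using that(2) assms(3) by (rule measure_Un_le)
    finally show ?thesis .
  qed
  from this[of A B] this[of B A] show ?thesis
    using assms by fastforce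
qed

lemma (in finite_measure) measure_UN_vimage_le_card_mult:
  assumes "finite I" "S \<in> sets N" "X k \<in> measurable M N"
    and "\<And>i. i \<in> I \<Longrightarrow> X i \<in> measurable M N"
    and "\<And>i. i \<in> I \<Longrightarrow> distr M N (X i) = distr M N (X k)"
  shows "measure M (\<Union>i\<in>I. X i -` S \<inter> space M) \<le> card I * measure M (X k -` S \<inter> space M)"
proof -
  have "measure M (\<Union>i\<in>I. X i -` S \<inter> space M) \<le> (\<Sum>i\<in>I. measure M (X i -` S \<inter> space M))"
    using assms by (intro finite_measure_subadditive_finite) (auto intro: measurable_sets)
  also have "\<dots> = (\<Sum>i\<in>I. measure M (X k -` S \<inter> space M))"
    using assms by (intro sum.cong refl) (metis measure_distr)
  finally show ?thesis by simp
qed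

theorem lemma2:
  fixes M :: "'a measure" and X :: "nat \<Rightarrow> 'a \<Rightarrow> real ^ 'd" and n :: nat
  assumes "prob_space M"
    and "n \<ge> 1"
    and "\<And>i. i \<in> {1..n} \<Longrightarrow> X i \<in> borel_measurable M"
    and "prob_space.indep_vars M (\<lambda>_. borel) X {1..n}"
    and "\<And>i. i \<in> {1..n} \<Longrightarrow> distr M borel (X i) = distr M borel (X 1)"
    and "integrable M (X 1)"
    and "(\<integral>\<omega>. X 1 \<omega> \<partial>M) = 0"
    and "\<And>j. measure M {\<omega> \<in> space M. X 1 \<omega> $ j \<noteq> 0} > 0"
  shows "(SUP t::real. \<bar>measure M {\<omega> \<in> space M. max_norm (self_norm X n \<omega>) \<le> t}
              - measure M {\<omega> \<in> space M. max_norm (self_norm (trunc_vec M X n) n \<omega>) \<le> t}\<bar>)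
         \<le> real n * measure M {\<omega> \<in> space M.
              \<exists>j. (X 1 \<omega> $ j)\<^sup>2 > (trunc_level M X n j)\<^sup>2 * real n}"
proof -
  interpret prob_space M by fact
  have X: "X i \<in> borel_measurable M" if "i \<in> {1..n}" for i
    using assms(3) that .
  define S where "S = {x :: real ^ 'd. \<exists>j. (x $ j)\<^sup>2 > (trunc_level M X n j)\<^sup>2 * real n}"
  define E where "E = (\<Union>i\<in>{1..n}. X i -` S \<inter> space M)"
  have S: "S \<in> sets borel"
    unfolding S_def by measurable
  have E: "E \<in> sets M"
    unfolding E_def using X S by (auto intro: measurable_sets)
  have "measure M E \<le> card {1..n} * measure M (X 1 -` S \<inter> space M)"
    unfolding E_def using X assms(2,5) S by (intro measure_UN_vimage_le_card_mult) auto
  then have E_le: "measure M E \<le> real n * measure M {\<omega> \<in> space M. X 1 \<omega> \<in> S}"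
    by (simp add: vimage_def Int_def conj_commute)
  have eq_off_E: "self_norm (trunc_vec M X n) n \<omega> = self_norm X n \<omega>" if "\<omega> \<in> space M - E" for \<omega>
    using that assms(2) by (intro self_norm_trunc_vec_eq) (auto simp: E_def S_def not_less)
  have T: "(\<lambda>\<omega>. self_norm X n \<omega> $ j) \<in> borel_measurable M"
    and T_trunc: "(\<lambda>\<omega>. self_norm (trunc_vec M X n) n \<omega> $ j) \<in> borel_measurable M" for j
    using X by (auto intro!: borel_measurable_self_norm_nth borel_measurable_trunc_vec)
  show ?thesis
    using eq_off_E E E_le[unfolded S_def mem_Collect_eq]
    by (intro cSUP_least order.trans[OF abs_measure_diff_le_if_eq_off] sets_Collect_max_norm_le
        T T_trunc) auto
qed

end
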